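(* Let $h>0$, $P\ge 0$, $0<\zeta\le 1$, $\sigma_A^2\ge 0$, $\sigma_{\rm cov}^2>0$, and let $N\ge 1$ be an integer. Define, for $\rho\in[0,1]$, $$f(\rho)=\log_2\!\left(1+\frac{(1-\rho)hP}{(1-\rho)\sigma_A^2+\sigma_{\rm cov}^2}\right).$$ Define the dynamic power splitting (DPS) region $$\mathcal{C}^{\rm DPS}(P)=\bigcup_{\boldsymbol\rho=(\rho_1,\dots,\rho_N)\in[0,1]^N}\Big\{(R,Q)\in\mathbb{R}^2:\ Q\le \tfrac1N\sum_{k=1}^N\rho_k\zeta hP,\ \ R\le \tfrac1N\sum_{k=1}^N f(\rho_k)\Big\}$$ and the static power splitting (SPS) region $$\mathcal{C}^{\rm SPS}(P)=\bigcup_{\rho\in[0,1]}\Big\{(R,Q)\in\mathbb{R}^2:\ Q\le \rho\zeta hP,\ \ R\le f(\rho)\Big\}.$$ Then $\mathcal{C}^{\rm DPS}(P)=\mathcal{C}^{\rm SPS}(P)$ for every $P\ge 0$.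
   Context: This models a separated information/energy receiver: in symbol $k$ of a block of $N$ symbols, a fraction $\rho_k$ of the received power $hP$ (channel gain $h$, transmit power $P$) is sent to an energy harvester with conversion efficiency $\zeta$, and the fraction $1-\rho_k$ to an information decoder whose rate is $f(\rho_k)$; $\sigma_A^2$ is antenna noise power and $\sigma_{\rm cov}^2$ is RF-to-baseband conversion noise power. SPS is the special case $\rho_k=\rho$ for all $k$. *)

theory Defs
  imports Complex_Main
begin

definition rate_f :: "real \<Rightarrow> real \<Rightarrow> real \<Rightarrow> real \<Rightarrow> real \<Rightarrow> real" where
  "rate_f h P sA2 scov2 \<rho> =
     log 2 (1 + ((1 - \<rho>) * h * P) / ((1 - \<rho>) * sA2 + scov2))"

definition C_DPS :: "nat \<Rightarrow> real \<Rightarrow> real \<Rightarrow> real \<Rightarrow> real \<Rightarrow> real \<Rightarrow> (real \<times> real) set" where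
  "C_DPS N h \<zeta> sA2 scov2 P =
     (\<Union>\<rho> \<in> {\<rho> :: nat \<Rightarrow> real. \<forall>k<N. 0 \<le> \<rho> k \<and> \<rho> k \<le> 1}.
        {(R, Q). Q \<le> (1 / real N) * (\<Sum>k<N. \<rho> k * \<zeta> * h * P)
               \<and> R \<le> (1 / real N) * (\<Sum>k<N. rate_f h P sA2 scov2 (\<rho> k))})"

definition C_SPS :: "real \<Rightarrow> real \<Rightarrow> real \<Rightarrow> real \<Rightarrow> real \<Rightarrow> (real \<times> real) set" where
  "C_SPS h \<zeta> sA2 scov2 P =
     (\<Union>\<rho> \<in> {0..1}. {(R, Q). Q \<le> \<rho> * \<zeta> * h * P \<and> R \<le> rate_f h P sA2 scov2 \<rho>})"

end

theory Submission
  imports Defs "HOL-Analysis.Analysis"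
begin

(*
  Idea: the rate function f(rho) is concave on [0,1].  Writing
    f(rho) = (ln((1-rho)(sigma_A^2 + hP) + sigma_cov^2) - ln((1-rho) sigma_A^2 + sigma_cov^2)) / ln 2,
  concavity follows from a second-derivative test.  Jensen's inequality then
  shows that a dynamic splitting vector (rho_1, ..., rho_N) is dominated by the
  static splitting rho = (1/N) sum rho_k: it delivers exactly the same average
  harvested energy and at least the same average rate, so C_DPS is contained
  in C_SPS.  Conversely every static splitting is the constant dynamic vector.
*)

lemma ln_affine_ratio_concave:
  fixes a b c :: real
  assumes b: "b \<ge> 0" and ab: "a \<ge> b" and c: "c > 0"
  shows "concave_on {0..1} (\<lambda>r. ln ((1-r) * a + c) - ln ((1-r) * b + c))"
proof (rule f''_le0_imp_concave[where f' = "\<lambda>r. b/((1-r) * b + c) - a/((1-r) * a + c)"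
      and f'' = "\<lambda>r. (b/((1-r) * b + c))\<^sup>2 - (a/((1-r) * a + c))\<^sup>2"])
  fix x :: real assume x: "x \<in> {0..1}"
  have v: "(1-x) * b + c > 0" using x b c by (simp add: add_nonneg_pos)
  have u: "(1-x) * a + c > 0" using x b ab c by (simp add: add_nonneg_pos)
  show "((\<lambda>r. ln ((1-r) * a + c) - ln ((1-r) * b + c)) has_real_derivative
          b/((1-x) * b + c) - a/((1-x) * a + c)) (at x)"
    using u v by (auto intro!: derivative_eq_intros simp: field_simps)
  show "((\<lambda>r. b/((1-r) * b + c) - a/((1-r) * a + c)) has_real_derivative
          (b/((1-x) * b + c))\<^sup>2 - (a/((1-x) * a + c))\<^sup>2) (at x)"
    using u v by (auto intro!: derivative_eq_intros simp: field_simps power2_eq_square)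
  text \<open>The key monotonicity: \<open>t \<mapsto> t / ((1-x) t + c)\<close> is increasing in \<open>t \<ge> 0\<close>.\<close>
  have "b/((1-x) * b + c) \<le> a/((1-x) * a + c)"
    using u v ab c by (simp add: divide_simps algebra_simps)
  moreover have "0 \<le> b/((1-x) * b + c)" using v b by simp
  ultimately show "(b/((1-x) * b + c))\<^sup>2 - (a/((1-x) * a + c))\<^sup>2 \<le> 0"
    by (simp add: power_mono)
qed simp

lemma rate_f_ln_ratio:
  fixes h P sA2 scov2 r :: real
  assumes hP: "h * P \<ge> 0" and sA2: "sA2 \<ge> 0" and scov2: "scov2 > 0"
    and r: "r \<in> {0..1}"
  shows "rate_f h P sA2 scov2 r
           = (ln ((1-r) * (sA2 + h*P) + scov2) - ln ((1-r) * sA2 + scov2)) / ln 2"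
proof -
  have v: "(1-r) * sA2 + scov2 > 0" using r sA2 scov2 by (simp add: add_nonneg_pos)
  have u: "(1-r) * (sA2 + h*P) + scov2 > 0" using r sA2 scov2 hP by (simp add: add_nonneg_pos)
  have "1 + (1-r) * h * P / ((1-r) * sA2 + scov2)
          = ((1-r) * (sA2 + h*P) + scov2) / ((1-r) * sA2 + scov2)"
    using v by (simp add: field_simps)
  then show ?thesis unfolding rate_f_def log_def using u v by (simp add: ln_div)
qed

lemma rate_f_concave:
  fixes h P sA2 scov2 :: real
  assumes "h * P \<ge> 0" and "sA2 \<ge> 0" and "scov2 > 0"
  shows "concave_on {0..1} (rate_f h P sA2 scov2)"
proof -
  define g where "g r = (ln ((1-r) * (sA2 + h*P) + scov2) - ln ((1-r) * sA2 + scov2)) / ln 2"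
    for r :: real
  have g: "concave_on {0..1} g"
    unfolding g_def using ln_affine_ratio_concave[of sA2 "sA2 + h*P" scov2] assms by auto
  have eq: "rate_f h P sA2 scov2 r = g r" if "r \<in> {0..1}" for r
    unfolding g_def using rate_f_ln_ratio[OF assms that] .
  show ?thesis
  proof (rule concave_on_linorderI)
    fix t x y :: real
    assume t: "0 < t" "t < 1" and xy: "x \<in> {0..1}" "y \<in> {0..1}" "x < y"
    have "(1 - t) * x + t * y \<le> (1 - t) * y + t * y"
      using t xy by (intro add_right_mono mult_left_mono) auto
    moreover have "0 \<le> (1 - t) * x + t * y" using t xy by simp
    ultimately have "(1 - t) * x + t * y \<in> {0..1}" using xy by (simp add: algebra_simps)
    then show "(1 - t) * rate_f h P sA2 scov2 x + t * rate_f h P sA2 scov2 y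
                 \<le> rate_f h P sA2 scov2 ((1 - t) *\<^sub>R x + t *\<^sub>R y)"
      using concave_onD[OF g, of t x y] t xy eq by simp
  qed simp
qed

lemma concave_uniform_average:
  fixes g :: "real \<Rightarrow> real" and \<rho> :: "nat \<Rightarrow> real" and N :: nat
  assumes g: "concave_on S g" and N: "N \<ge> 1" and \<rho>: "\<And>k. k < N \<Longrightarrow> \<rho> k \<in> S"
  shows "(1 / real N) * (\<Sum>k<N. \<rho> k) \<in> S"
    and "(1 / real N) * (\<Sum>k<N. g (\<rho> k)) \<le> g ((1 / real N) * (\<Sum>k<N. \<rho> k))"
proof -
  have weights: "(\<Sum>k<N. 1 / real N) = 1" using N by simp
  have mean: "(\<Sum>k<N. (1 / real N) *\<^sub>R \<rho> k) = (1 / real N) * (\<Sum>k<N. \<rho> k)"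
    by (simp add: sum_distrib_left)
  have "(\<Sum>k<N. (1 / real N) *\<^sub>R \<rho> k) \<in> S"
    by (rule convex_sum[OF _ concave_on_imp_convex[OF g] weights]) (use N \<rho> in auto)
  then show "(1 / real N) * (\<Sum>k<N. \<rho> k) \<in> S"
    by (simp only: mean)
  show "(1 / real N) * (\<Sum>k<N. g (\<rho> k)) \<le> g ((1 / real N) * (\<Sum>k<N. \<rho> k))"
    using concave_on_sum[OF _ _ g weights, of \<rho>] \<rho> N mean
    by (simp add: sum_distrib_left lessThan_empty_iff)
qed

lemma C_DPS_subset_C_SPS:
  fixes h P \<zeta> sA2 scov2 :: real and N :: nat
  assumes "h * P \<ge> 0" and "sA2 \<ge> 0" and "scov2 > 0" and N: "N \<ge> 1"
  shows "C_DPS N h \<zeta> sA2 scov2 P \<subseteq> C_SPS h \<zeta> sA2 scov2 P"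
proof
  fix x assume "x \<in> C_DPS N h \<zeta> sA2 scov2 P"
  then obtain \<rho> R Q where x: "x = (R, Q)" and \<rho>: "\<And>k. k < N \<Longrightarrow> \<rho> k \<in> {0..1}"
    and hQ: "Q \<le> (1 / real N) * (\<Sum>k<N. \<rho> k * \<zeta> * h * P)"
    and hR: "R \<le> (1 / real N) * (\<Sum>k<N. rate_f h P sA2 scov2 (\<rho> k))"
    unfolding C_DPS_def by auto
  define m where "m = (1 / real N) * (\<Sum>k<N. \<rho> k)"
  note average = concave_uniform_average[OF rate_f_concave[OF assms(1-3)] N, where \<rho> = \<rho>, OF \<rho>]
  have "m \<in> {0..1}" using average(1) unfolding m_def .
  moreover have "Q \<le> m * \<zeta> * h * P"
    using hQ unfolding m_def by (simp add: sum_distrib_right mult.assoc)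
  moreover have "R \<le> rate_f h P sA2 scov2 m"
    using hR average(2) unfolding m_def by linarith
  ultimately show "x \<in> C_SPS h \<zeta> sA2 scov2 P"
    unfolding C_SPS_def x by blast
qed

lemma C_SPS_subset_C_DPS:
  fixes h P \<zeta> sA2 scov2 :: real and N :: nat
  assumes N: "N \<ge> 1"
  shows "C_SPS h \<zeta> sA2 scov2 P \<subseteq> C_DPS N h \<zeta> sA2 scov2 P"
proof
  fix x assume "x \<in> C_SPS h \<zeta> sA2 scov2 P"
  then obtain r R Q where x: "x = (R, Q)" and r: "0 \<le> r" "r \<le> 1"
    and hQ: "Q \<le> r * \<zeta> * h * P" and hR: "R \<le> rate_f h P sA2 scov2 r"
    unfolding C_SPS_def by auto
  show "x \<in> C_DPS N h \<zeta> sA2 scov2 P"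
    unfolding C_DPS_def x using r hQ hR N by (intro UN_I[of "\<lambda>_. r"]) auto
qed

theorem proposition1:
  fixes h P \<zeta> sA2 scov2 :: real and N :: nat
  assumes "h > 0" and "P \<ge> 0" and "0 < \<zeta>" and "\<zeta> \<le> 1"
    and "sA2 \<ge> 0" and "scov2 > 0" and "N \<ge> 1"
  shows "C_DPS N h \<zeta> sA2 scov2 P = C_SPS h \<zeta> sA2 scov2 P"
proof
  have "h * P \<ge> 0" using assms by simp
  then show "C_DPS N h \<zeta> sA2 scov2 P \<subseteq> C_SPS h \<zeta> sA2 scov2 P"
    using C_DPS_subset_C_SPS assms by blast
  show "C_SPS h \<zeta> sA2 scov2 P \<subseteq> C_DPS N h \<zeta> sA2 scov2 P"
    using C_SPS_subset_C_DPS assms by blast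
qed

end
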